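(* For any number of features $D$, $Z_1(\boldsymbol\lambda)>1$ for every feasible $\boldsymbol\lambda$ in the positive regions $P=\mathbb R^D_{++}\cup(-\mathbb R^D_{++})$, where $$Z_1(\boldsymbol\lambda)=\pi_1^*\prod_{i=1}^D(1+\pi_2^*\lambda_i)+\pi_2^*\prod_{i=1}^D(1-\pi_1^*\lambda_i).$$
   Context: Setting: a mixture of two Bernoullis on $\{0,1\}^D$. - The true distribution is $p^*(\mathbf x)=\pi_1^*B(\mathbf x\mid\boldsymbol\mu_1^* )+\pi_2^*B(\mathbf x\mid\boldsymbol\mu_2^* )$, where $B(\mathbf x\mid\boldsymbol\mu)=\prod_i\mu_i^{x_i}(1-\mu_i)^{1-x_i}$, $\pi_1^*\in(0,1)$ and $\pi_2^*=1-\pi_1^*$. - Let $\overline{\mathbf x}=\mathbb E_{p^*}[\mathbf x]$, $S_i=\overline x_i(1-\overline x_i)$ and $\boldsymbol\mu^*=(\boldsymbol\mu_1^*-\boldsymbol\mu_2^* )/2$. - For a model component mean $\boldsymbol\mu_1\in[0,1]^D$, set $\mathbf b=\boldsymbol\mu_1-\overline{\mathbf x}$ and $\lambda_i=2S_i^{-1}\mu_i^*b_i$. - The feasible domain of $\boldsymbol\lambda$ is the image of $[0,1]^D$ under this affine map. On it, $1+\pi_2^*\lambda_i\ge0$ and $1-\pi_1^*\lambda_i\ge0$. - $Z_1(\boldsymbol\lambda)$ is the leading-order (small $\pi_1$, $\boldsymbol\mu_2=\overline{\mathbf x}$) factor by which EM multiplies $\pi_1$. - $\mathbb R^D_{++}$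 denotes vectors with all coordinates strictly positive. *)

theory Defs
  imports "HOL-Analysis.Analysis"
begin

text \<open>Mean of the true mixture of two product Bernoullis:
  E[x] = pi1 * mu1* + pi2 * mu2*, with pi2 = 1 - pi1.\<close>
definition xbar :: "real \<Rightarrow> real^'n \<Rightarrow> real^'n \<Rightarrow> real^'n" where
  "xbar p1 m1 m2 = (\<chi> i. p1 * m1 $ i + (1 - p1) * m2 $ i)"

definition Svar :: "real \<Rightarrow> real^'n \<Rightarrow> real^'n \<Rightarrow> real^'n" where
  "Svar p1 m1 m2 = (\<chi> i. xbar p1 m1 m2 $ i * (1 - xbar p1 m1 m2 $ i))"

text \<open>lambda_i = 2 S_i^{-1} mu*_i b_i with mu* = (mu1* - mu2*)/2, b = mu1 - xbar.\<close>
definition lam :: "real \<Rightarrow> real^'n \<Rightarrow> real^'n \<Rightarrow> real^'n \<Rightarrow> real^'n" where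
  "lam p1 m1 m2 mu1 = (\<chi> i. 2 * inverse (Svar p1 m1 m2 $ i) * ((m1 $ i - m2 $ i) / 2)
                              * (mu1 $ i - xbar p1 m1 m2 $ i))"

definition Z1 :: "real \<Rightarrow> real^'n \<Rightarrow> real" where
  "Z1 p1 l = p1 * (\<Prod>i\<in>UNIV. 1 + (1 - p1) * l $ i) + (1 - p1) * (\<Prod>i\<in>UNIV. 1 - p1 * l $ i)"

end

theory Submission
  imports Defs
begin

text \<open>Write Z = a A + (1 - a) B with A = \<Prod>(1 + (1 - a) x i) and B = \<Prod>(1 - a x i)
  over an index set S.  Adding a coordinate j to S raises Z by exactly
  a (1 - a) x j (A - B).  For positive feasible x we have B \<le> 1 \<le> A, and 1 < A once S
  is nonempty, so Z never drops below its value 1 at S = {} and increases strictly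
  from the second coordinate on.  The negative region reduces to the positive one
  by the symmetry (a, x) \<mapsto> (1 - a, -x) of Z.  Feasibility of \<lambda> holds because
  S i - a (m1 i - m2 i) b i and S i + (1 - a) (m1 i - m2 i) b i are sums of
  nonnegative monomials in the Bernoulli parameters.\<close>

definition mixture_gain :: "real \<Rightarrow> ('i \<Rightarrow> real) \<Rightarrow> 'i set \<Rightarrow> real" where
  "mixture_gain a x S = a * (\<Prod>i\<in>S. 1 + (1 - a) * x i) + (1 - a) * (\<Prod>i\<in>S. 1 - a * x i)"

lemma mixture_gain_empty [simp]: "mixture_gain a x {} = 1"
  by (simp add: mixture_gain_def)

lemma mixture_gain_insert:
  assumes "finite S" "j \<notin> S"
  shows "mixture_gain a x (insert j S) = mixture_gain a x S
    + a * (1 - a) * x j * ((\<Prod>i\<in>S. 1 + (1 - a) * x i) - (\<Prod>i\<in>S. 1 - a * x i))"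
  using assms by (simp add: mixture_gain_def algebra_simps)

lemma mixture_gain_swap: "mixture_gain (1 - a) (\<lambda>i. - x i) S = mixture_gain a x S"
  by (simp add: mixture_gain_def)

lemma prod_one_minus_le_one:
  fixes y :: "'i \<Rightarrow> real"
  assumes "\<And>i. i \<in> S \<Longrightarrow> 0 \<le> y i \<and> y i \<le> 1"
  shows "(\<Prod>i\<in>S. 1 - y i) \<le> 1"
  using assms by (intro prod_le_1) auto

lemma prod_one_plus_gt_one:
  fixes y :: "'i \<Rightarrow> real"
  assumes "finite S" "S \<noteq> {}" "\<And>i. i \<in> S \<Longrightarrow> 0 < y i"
  shows "1 < (\<Prod>i\<in>S. 1 + y i)"
proof -
  obtain j where j: "j \<in> S" using assms(2) by blast
  have "1 \<le> (\<Prod>i\<in>S - {j}. 1 + y i)"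
    using assms(3) by (intro prod_ge_1) (simp add: less_imp_le)
  moreover have "1 < 1 + y j" using assms(3)[OF j] by simp
  ultimately have "1 < (1 + y j) * (\<Prod>i\<in>S - {j}. 1 + y i)"
    by (smt (verit) mult_left_mono mult_cancel_left1)
  also have "\<dots> = (\<Prod>i\<in>S. 1 + y i)"
    using assms(1) j by (simp add: prod.remove)
  finally show ?thesis .
qed

lemma mixture_gain_ge_one:
  fixes a :: real and x :: "'i \<Rightarrow> real"
  assumes "finite S" "0 < a" "a < 1"
    and "\<And>i. i \<in> S \<Longrightarrow> 0 < x i" "\<And>i. i \<in> S \<Longrightarrow> a * x i \<le> 1"
  shows "1 \<le> mixture_gain a x S"
  using assms
proof (induction S rule: finite_induct)
  case empty
  then show ?case by simp
next
  case (insert j S)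
  have "(\<Prod>i\<in>S. 1 - a * x i) \<le> 1"
    using insert.prems by (intro prod_one_minus_le_one) (simp add: less_imp_le)
  also have "1 \<le> (\<Prod>i\<in>S. 1 + (1 - a) * x i)"
    using insert.prems by (intro prod_ge_1) (simp add: less_imp_le)
  finally have "0 \<le> a * (1 - a) * x j * ((\<Prod>i\<in>S. 1 + (1 - a) * x i) - (\<Prod>i\<in>S. 1 - a * x i))"
    using insert.prems by (simp add: less_imp_le)
  then show ?case using insert by (simp add: mixture_gain_insert)
qed

lemma mixture_gain_gt_one:
  fixes a :: real and x :: "'i \<Rightarrow> real"
  assumes S: "finite S" "2 \<le> card S" and a: "0 < a" "a < 1"
    and x: "\<And>i. i \<in> S \<Longrightarrow> 0 < x i" "\<And>i. i \<in> S \<Longrightarrow> a * x i \<le> 1"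
  shows "1 < mixture_gain a x S"
proof -
  obtain j where j: "j \<in> S" using S by fastforce
  define T where "T = S - {j}"
  have "\<not> S \<subseteq> {j}"
    using S card_mono[of "{j}" S] by auto
  then have T: "finite T" "T \<noteq> {}" "j \<notin> T" "S = insert j T"
    using S j by (auto simp: T_def)
  have "(\<Prod>i\<in>T. 1 - a * x i) \<le> 1"
    using a x T by (intro prod_one_minus_le_one) (simp add: less_imp_le)
  also have "1 < (\<Prod>i\<in>T. 1 + (1 - a) * x i)"
    using a x T by (intro prod_one_plus_gt_one) auto
  finally have "0 < a * (1 - a) * x j * ((\<Prod>i\<in>T. 1 + (1 - a) * x i) - (\<Prod>i\<in>T. 1 - a * x i))"
    using a x j by simp
  moreover have "1 \<le> mixture_gain a x T"
    using a x T by (intro mixture_gain_ge_one) auto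
  ultimately show ?thesis using T by (simp add: mixture_gain_insert)
qed

lemma Z1_eq_mixture_gain: "Z1 a l = mixture_gain a (\<lambda>i. l $ i) UNIV"
  by (simp add: Z1_def mixture_gain_def)

lemma lam_bounds_scalar:
  fixes a m1 m2 mu :: real
  assumes "0 < a" "a < 1" "0 \<le> m1" "m1 \<le> 1" "0 \<le> m2" "m2 \<le> 1" "0 \<le> mu" "mu \<le> 1"
  defines "xb \<equiv> a * m1 + (1 - a) * m2"
  defines "l \<equiv> (m1 - m2) * (mu - xb) / (xb * (1 - xb))"
  shows "0 \<le> 1 - a * l" "0 \<le> 1 + (1 - a) * l"
proof -
  have xb: "0 \<le> xb" "xb \<le> 1"
    using assms(1-6) convex_bound_le[of m1 1 m2 a "1 - a"] by (auto simp: xb_def)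
  have shrink: "xb * (1 - xb) - a * ((m1 - m2) * (mu - xb))
      = mu * (1 - xb) * m2 + (1 - mu) * xb * (1 - m2)"
    by (simp add: xb_def algebra_simps)
  have grow: "xb * (1 - xb) + (1 - a) * ((m1 - m2) * (mu - xb))
      = mu * (1 - xb) * m1 + (1 - mu) * xb * (1 - m1)"
    by (simp add: xb_def algebra_simps)
  have "0 \<le> mu * (1 - xb) * m2 + (1 - mu) * xb * (1 - m2)"
    using assms(5-8) xb by (intro add_nonneg_nonneg mult_nonneg_nonneg) auto
  then have shrink_le: "a * ((m1 - m2) * (mu - xb)) \<le> xb * (1 - xb)"
    using shrink by linarith
  have "0 \<le> mu * (1 - xb) * m1 + (1 - mu) * xb * (1 - m1)"
    using assms(3,4,7,8) xb by (intro add_nonneg_nonneg mult_nonneg_nonneg) auto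
  then have grow_le: "- ((1 - a) * ((m1 - m2) * (mu - xb))) \<le> xb * (1 - xb)"
    using grow by linarith
  have "0 \<le> 1 - a * l \<and> 0 \<le> 1 + (1 - a) * l"
  proof (cases "xb * (1 - xb) = 0")
    case True
    \<comment> \<open>division by zero yields 0, so a degenerate coordinate has \<lambda> i = 0\<close>
    have "l = 0" unfolding l_def True by simp
    then show ?thesis by simp
  next
    case False
    then have S: "0 < xb * (1 - xb)" using xb by (simp add: order_le_neq_trans)
    have "a * l = a * ((m1 - m2) * (mu - xb)) / (xb * (1 - xb))"
      by (simp add: l_def)
    also have "\<dots> \<le> 1"
      unfolding pos_divide_le_eq[OF S] using shrink_le by simp
    finally have "a * l \<le> 1" .
    moreover have "- 1 \<le> (1 - a) * ((m1 - m2) * (mu - xb)) / (xb * (1 - xb))"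
      unfolding pos_le_divide_eq[OF S] using grow_le by simp
    moreover have "\<dots> = (1 - a) * l"
      by (simp add: l_def)
    ultimately show ?thesis by simp
  qed
  then show "0 \<le> 1 - a * l" "0 \<le> 1 + (1 - a) * l" by auto
qed

lemma lam_feasible:
  assumes "0 < p1" "p1 < 1"
    and "0 \<le> m1 $ i" "m1 $ i \<le> 1" "0 \<le> m2 $ i" "m2 $ i \<le> 1" "0 \<le> mu1 $ i" "mu1 $ i \<le> 1"
  shows "0 \<le> 1 - p1 * lam p1 m1 m2 mu1 $ i" "0 \<le> 1 + (1 - p1) * lam p1 m1 m2 mu1 $ i"
proof -
  define xb where "xb = p1 * m1 $ i + (1 - p1) * m2 $ i"
  have scale: "2 * inverse D * (d / 2) * M = d * M / D" for D d M :: real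
    by (simp add: inverse_eq_divide)
  have lam_eq: "lam p1 m1 m2 mu1 $ i = (m1 $ i - m2 $ i) * (mu1 $ i - xb) / (xb * (1 - xb))"
    unfolding lam_def Svar_def xbar_def xb_def vec_lambda_beta by (rule scale)
  show "0 \<le> 1 - p1 * lam p1 m1 m2 mu1 $ i" "0 \<le> 1 + (1 - p1) * lam p1 m1 m2 mu1 $ i"
    unfolding lam_eq xb_def by (fact lam_bounds_scalar[OF assms])+
qed

theorem mainTheorem5:
  fixes p1 :: real and m1 m2 mu1 :: "real^'n"
  assumes "CARD('n) \<ge> 2"
    and "0 < p1" "p1 < 1"
    and "\<forall>i. 0 \<le> m1 $ i \<and> m1 $ i \<le> 1"
    and "\<forall>i. 0 \<le> m2 $ i \<and> m2 $ i \<le> 1"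
    and "\<forall>i. 0 \<le> mu1 $ i \<and> mu1 $ i \<le> 1"
    and "(\<forall>i. lam p1 m1 m2 mu1 $ i > 0) \<or> (\<forall>i. lam p1 m1 m2 mu1 $ i < 0)"
  shows "Z1 p1 (lam p1 m1 m2 mu1) > 1"
proof -
  let ?l = "lam p1 m1 m2 mu1"
  have card: "finite (UNIV :: 'n set)" "2 \<le> card (UNIV :: 'n set)" using assms(1) by auto
  have feasible: "0 \<le> 1 - p1 * ?l $ i" "0 \<le> 1 + (1 - p1) * ?l $ i" for i
    using lam_feasible[OF assms(2,3), of m1 i m2 mu1] assms(4-6) by auto
  from assms(7) show ?thesis
  proof
    assume "\<forall>i. ?l $ i > 0"
    then have "1 < mixture_gain p1 (\<lambda>i. ?l $ i) UNIV"
      using feasible assms(2,3) by (intro mixture_gain_gt_one[OF card]) auto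
    then show ?thesis by (simp add: Z1_eq_mixture_gain)
  next
    assume "\<forall>i. ?l $ i < 0"
    then have "1 < mixture_gain (1 - p1) (\<lambda>i. - ?l $ i) UNIV"
      using feasible assms(2,3) by (intro mixture_gain_gt_one[OF card]) (auto simp: algebra_simps)
    then show ?thesis by (simp add: Z1_eq_mixture_gain mixture_gain_swap)
  qed
qed

end
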